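(* For every $n\in\mathbb{N}$, the graph class $\mathcal{F}_n$ satisfies $$\mathcal{N}(\mathcal{F}_n,\delta^{\mathcal{T}}_\square,4)\le\frac{2\,|\mathcal{F}_n/\!\sim_{\mathrm{WL}}|}{n}.$$
   Context: Let $P_n$ be the path with vertex set $\{v_1,\dots,v_n\}$ and edges $\{v_1,v_2\},\dots,\{v_{n-1},v_n\}$, and $\mathcal{P}(n)$ the set of graphs that are disjoint unions of paths with $n$ vertices in total. $\mathcal{F}_n$ is the set of graphs with vertex set $V(P_n)\,\dot\cup\,V(P)$ and edge set $E(P)\,\dot\cup\,E(P_n)\,\dot\cup\,\{\{u,v\}\}$, for some $P\in\mathcal{P}(n)$, $u\in V(P)$ and $v\in V(P_n)$ (graphs considered up to isomorphism). $\mathcal{F}_n/\!\sim_{\mathrm{WL}}$ is the set of equivalence classes of $\mathcal{F}_n$ under $1$-WL indistinguishability (1-WL: constant initial colors, $C_t(v)=\mathsf{RELABEL}(C_{t-1}(v),\{\!\!\{C_{t-1}(w):w\in N(v)\}\!\!\})$ with injective $\mathsf{RELABEL}$; graphs indistinguishable if the color multisets agree at every iteration). Tree distance: for graphs $G,H$ on the same number $N$ of vertices with adjacency matrices $\vec{A}(G),\vec{A}(H)$, $\delta^{\mathcal{T}}_\square(G,H)=\min_{\vec{S}}\|\vec{A}(G)\vec{S}-\vec{S}\vec{A}(H)\|_\square$ over $N\times N$ doubly-stochastic matrices, where $\|\vec{M}\|_\square=\max_{S,T\subseteq[N]}|\sum_{i\in S,j\in T}m_{ij}|$. $\mathcal{N}(\mathcal{X},d,\varepsilon)$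 is the minimum cardinality of a subset $C\subseteq\mathcal{X}$ such that every $x\in\mathcal{X}$ has $y\in C$ with $d(x,y)\le\varepsilon$. *)

theory Defs
  imports Complex_Main "HOL-Library.Multiset"
begin

text \<open>Graphs on the vertex set {0..<N} are given by an adjacency relation
  E :: nat \<Rightarrow> nat \<Rightarrow> bool (symmetric, irreflexive, and false outside {0..<N}).\<close>

type_synonym graph = "nat \<Rightarrow> nat \<Rightarrow> bool"

text \<open>The class F_n, as labelled graphs on {0..<2n} (closed under relabelling).
  Positions 0..<n carry the path P_n (edges between consecutive positions);
  positions n..<2n carry a disjoint union of paths P on n vertices, laid out
  consecutively, where the set B marks the positions i after which the
  current path ends; finally one extra edge joins position u (in P) and
  position v (in P_n).  The bijection sigma places positions on vertices.\<close>

definition F_class :: "nat \<Rightarrow> graph set" where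
  "F_class n = {E. \<exists>\<sigma> B u v.
      bij_betw \<sigma> {0..<2*n} {0..<2*n} \<and> B \<subseteq> {n..<2*n} \<and>
      n \<le> u \<and> u < 2*n \<and> v < n \<and>
      (\<forall>x y. E x y \<longleftrightarrow>
         (\<exists>i. ((x = \<sigma> i \<and> y = \<sigma> (Suc i)) \<or> (y = \<sigma> i \<and> x = \<sigma> (Suc i))) \<and>
              (Suc i < n \<or> (n \<le> i \<and> Suc i < 2*n \<and> i \<notin> B)))
         \<or> (x = \<sigma> u \<and> y = \<sigma> v) \<or> (y = \<sigma> u \<and> x = \<sigma> v))}"

definition adj :: "graph \<Rightarrow> nat \<Rightarrow> nat \<Rightarrow> real" where
  "adj E i j = (if E i j then 1 else 0)"

definition doubly_stochastic :: "nat \<Rightarrow> (nat \<Rightarrow> nat \<Rightarrow> real) \<Rightarrow> bool" where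
  "doubly_stochastic N S \<longleftrightarrow>
     (\<forall>i<N. \<forall>j<N. 0 \<le> S i j) \<and>
     (\<forall>i<N. (\<Sum>j<N. S i j) = 1) \<and> (\<forall>j<N. (\<Sum>i<N. S i j) = 1)"

definition cut_norm :: "nat \<Rightarrow> (nat \<Rightarrow> nat \<Rightarrow> real) \<Rightarrow> real" where
  "cut_norm N M = Max {\<bar>\<Sum>i\<in>S. \<Sum>j\<in>T. M i j\<bar> | S T. S \<subseteq> {0..<N} \<and> T \<subseteq> {0..<N}}"

definition tree_dist :: "nat \<Rightarrow> graph \<Rightarrow> graph \<Rightarrow> real" where
  "tree_dist N G H = Inf ((\<lambda>S. cut_norm N (\<lambda>i j.
        (\<Sum>k<N. adj G i k * S k j) - (\<Sum>k<N. S i k * adj H k j)))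
      ` {S. doubly_stochastic N S})"

definition covering_number :: "'a set \<Rightarrow> ('a \<Rightarrow> 'a \<Rightarrow> real) \<Rightarrow> real \<Rightarrow> nat" where
  "covering_number X d \<epsilon> =
     (LEAST k. \<exists>C. C \<subseteq> X \<and> finite C \<and> card C = k \<and> (\<forall>x\<in>X. \<exists>y\<in>C. d x y \<le> \<epsilon>))"

text \<open>1-WL colour refinement.  Colours are represented canonically by the
  datatype below: the constructor WL_Step is an injective RELABEL.\<close>

datatype wl_color = WL_Init | WL_Step wl_color "wl_color multiset"

fun wl :: "nat \<Rightarrow> graph \<Rightarrow> nat \<Rightarrow> nat \<Rightarrow> wl_color" where
  "wl N E 0 v = WL_Init"
| "wl N E (Suc t) v =
     WL_Step (wl N E t v) (image_mset (wl N E t) (mset_set {w. w < N \<and> E v w}))"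

definition wl_equiv :: "nat \<Rightarrow> graph \<Rightarrow> graph \<Rightarrow> bool" where
  "wl_equiv N G H \<longleftrightarrow>
     (\<forall>t. image_mset (wl N G t) (mset_set {0..<N}) = image_mset (wl N H t) (mset_set {0..<N}))"

definition wl_indist_rel :: "nat \<Rightarrow> graph set \<Rightarrow> (graph \<times> graph) set" where
  "wl_indist_rel N X = {(G, H). G \<in> X \<and> H \<in> X \<and> wl_equiv N G H}"

end

theory Submission
  imports Defs
begin

text \<open>
  Moving the endpoint v of the extra edge along P_n changes only two arcs of a graph in F_n.
  If two moved graphs are 1-WL indistinguishable, their common stable colouring yields a
  doubly stochastic S with A S = S B (Tinhofer), and S certifies that the unmoved graphs are at
  tree distance at most 2 + 2 = 4.  Now take a maximal set P of F_n containing no two graphs at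
  mutual distance at most 4; it is a 4-cover.  For p in P, moving the edge of p to the positions
  j < ceil(n/2) of P_n gives graphs in pairwise distinct 1-WL classes: for different p by the
  above, for different j because 1-WL detects the attachment point (no vertex of degree 3 for
  j = 0, otherwise the distance from the ends of P_n to the vertex of degree 3).  Hence
  |P| * ceil(n/2) is at most the number of classes.
\<close>

section \<open>Cut norm and tree distance\<close>

lemma finite_cut_sums:
  fixes N :: nat
  shows "finite {\<bar>\<Sum>i\<in>S. \<Sum>j\<in>T. M i j\<bar> | S T. S \<subseteq> {0..<N} \<and> T \<subseteq> {0..<N}}"
  by (intro finite_image_set2) (simp_all add: Pow_def[symmetric])

lemma abs_cut_sum_le_cut_norm:
  "S \<subseteq> {0..<N} \<Longrightarrow> T \<subseteq> {0..<N} \<Longrightarrow> \<bar>\<Sum>i\<in>S. \<Sum>j\<in>T. M i j\<bar> \<le> cut_norm N M"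
  unfolding cut_norm_def by (rule Max_ge[OF finite_cut_sums]) blast

lemma cut_norm_nonneg: "0 \<le> cut_norm N M"
  using abs_cut_sum_le_cut_norm[of "{}" N "{}" M] by simp

lemma cut_norm_le:
  assumes "\<And>S T. S \<subseteq> {0..<N} \<Longrightarrow> T \<subseteq> {0..<N} \<Longrightarrow> \<bar>\<Sum>i\<in>S. \<Sum>j\<in>T. M i j\<bar> \<le> b"
  shows "cut_norm N M \<le> b"
  unfolding cut_norm_def using assms by (subst Max_le_iff[OF finite_cut_sums]) blast+

lemma tree_dist_le:
  assumes "doubly_stochastic N S"
  shows "tree_dist N G H \<le> cut_norm N (\<lambda>i j. (\<Sum>k<N. adj G i k * S k j) - (\<Sum>k<N. S i k * adj H k j))"
  unfolding tree_dist_def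
  using assms by (intro cInf_lower bdd_belowI[where m=0]) (auto intro: cut_norm_nonneg)

lemma doubly_stochastic_id: "doubly_stochastic N (\<lambda>i j. of_bool (i = j))"
  unfolding doubly_stochastic_def by simp

lemma doubly_stochastic_transpose:
  "doubly_stochastic N S \<Longrightarrow> doubly_stochastic N (\<lambda>i j. S j i)"
  unfolding doubly_stochastic_def by blast

lemma doubly_stochastic_partial_row_sum:
  assumes "doubly_stochastic N S" "J \<subseteq> {0..<N}" "k < N"
  shows "0 \<le> (\<Sum>j\<in>J. S k j) \<and> (\<Sum>j\<in>J. S k j) \<le> 1"
proof -
  have nonneg: "\<And>j. j < N \<Longrightarrow> 0 \<le> S k j" and row: "(\<Sum>j<N. S k j) = 1"
    using assms unfolding doubly_stochastic_def by auto
  have "(\<Sum>j\<in>J. S k j) \<le> (\<Sum>j<N. S k j)"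
    using assms(2) nonneg by (intro sum_mono2) auto
  moreover have "0 \<le> (\<Sum>j\<in>J. S k j)"
    using assms(2) nonneg by (intro sum_nonneg) auto
  ultimately show ?thesis using row by simp
qed

lemma tree_dist_self: "tree_dist N G G = 0"
proof (rule antisym)
  let ?I = "\<lambda>i j. of_bool (i = j) :: real"
  have "tree_dist N G G \<le> cut_norm N (\<lambda>i j. (\<Sum>k<N. adj G i k * ?I k j) - (\<Sum>k<N. ?I i k * adj G k j))"
    by (rule tree_dist_le[OF doubly_stochastic_id])
  also have "\<dots> \<le> 0"
  proof (rule cut_norm_le)
    fix S T assume "S \<subseteq> {0..<N}" "T \<subseteq> {0..<N}"
    then have "(\<Sum>k<N. adj G i k * ?I k j) - (\<Sum>k<N. ?I i k * adj G k j) = 0" if "i \<in> S" "j \<in> T" for i j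
      using that by (auto simp: subset_iff)
    then show "\<bar>\<Sum>i\<in>S. \<Sum>j\<in>T. (\<Sum>k<N. adj G i k * ?I k j) - (\<Sum>k<N. ?I i k * adj G k j)\<bar> \<le> 0"
      by simp
  qed
  finally show "tree_dist N G G \<le> 0" .
  show "0 \<le> tree_dist N G G"
    unfolding tree_dist_def using doubly_stochastic_id[of N]
    by (intro cInf_greatest) (auto intro: cut_norm_nonneg)
qed

section \<open>Fractional isomorphisms from equitable colourings\<close>

definition class_size :: "nat \<Rightarrow> (nat \<Rightarrow> 'c) \<Rightarrow> 'c \<Rightarrow> nat" where
  "class_size N c a = card {x. x < N \<and> c x = a}"

definition colour_degree :: "nat \<Rightarrow> graph \<Rightarrow> (nat \<Rightarrow> 'c) \<Rightarrow> nat \<Rightarrow> 'c \<Rightarrow> nat" where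
  "colour_degree N E c x b = card {k. k < N \<and> E x k \<and> c k = b}"

lemma class_size_pos: "x < N \<Longrightarrow> 0 < class_size N c (c x)"
  unfolding class_size_def by (subst card_gt_0_iff) auto

lemma sum_if_const_eq_card:
  fixes N :: nat and r :: real
  shows "(\<Sum>k<N. if P k then r else 0) = real (card {k. k < N \<and> P k}) * r"
proof -
  have "(\<Sum>k<N. if P k then r else 0) = (\<Sum>k\<in>{k. k < N \<and> P k}. r)"
    by (rule sum.mono_neutral_cong_right) auto
  then show ?thesis by simp
qed

lemma card_coloured_arcs:
  assumes equitable: "\<And>x y. x < N \<Longrightarrow> y < N \<Longrightarrow> c x = c y \<Longrightarrow> colour_degree N E c x = colour_degree N E c y"
    and "x < N"
  shows "card {(x', k). x' < N \<and> k < N \<and> c x' = c x \<and> E x' k \<and> c k = b}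
           = class_size N c (c x) * colour_degree N E c x b"
proof -
  have "{(x', k). x' < N \<and> k < N \<and> c x' = c x \<and> E x' k \<and> c k = b}
          = (SIGMA x':{x'. x' < N \<and> c x' = c x}. {k. k < N \<and> E x' k \<and> c k = b})"
    by auto
  then have "card {(x', k). x' < N \<and> k < N \<and> c x' = c x \<and> E x' k \<and> c k = b}
          = (\<Sum>x'\<in>{x'. x' < N \<and> c x' = c x}. colour_degree N E c x' b)"
    by (simp add: card_SigmaI colour_degree_def)
  also have "\<dots> = (\<Sum>x'\<in>{x'. x' < N \<and> c x' = c x}. colour_degree N E c x b)"
  proof (rule sum.cong)
    fix x' assume "x' \<in> {x'. x' < N \<and> c x' = c x}"
    then show "colour_degree N E c x' b = colour_degree N E c x b"
      using equitable[of x' x] \<open>x < N\<close> by simp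
  qed simp
  finally show ?thesis by (simp add: class_size_def)
qed

lemma colour_degree_double_count:
  assumes sym: "\<And>x y. E x y = E y x"
    and equitable: "\<And>x y. x < N \<Longrightarrow> y < N \<Longrightarrow> c x = c y \<Longrightarrow> colour_degree N E c x = colour_degree N E c y"
    and "x < N" "y < N"
  shows "class_size N c (c x) * colour_degree N E c x (c y)
           = class_size N c (c y) * colour_degree N E c y (c x)"
proof -
  let ?A = "{(x', k). x' < N \<and> k < N \<and> c x' = c x \<and> E x' k \<and> c k = c y}"
  let ?B = "{(x', k). x' < N \<and> k < N \<and> c x' = c y \<and> E x' k \<and> c k = c x}"
  have "(\<lambda>(i, k). (k, i)) ` ?A = ?B"
  proof (rule set_eqI, rule iffI)
    fix p assume "p \<in> ?B"
    then obtain i k where "p = (i, k)" "(k, i) \<in> ?A" using sym by auto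
    then show "p \<in> (\<lambda>(i, k). (k, i)) ` ?A" by force
  qed (use sym in auto)
  have "class_size N c (c x) * colour_degree N E c x (c y) = card ?A"
    by (rule card_coloured_arcs[OF equitable \<open>x < N\<close>, symmetric])
  also have "\<dots> = card ?B"
    using card_image[OF swap_inj_on, of ?A] \<open>(\<lambda>(i, k). (k, i)) ` ?A = ?B\<close> by simp
  also have "\<dots> = class_size N c (c y) * colour_degree N E c y (c x)"
    by (rule card_coloured_arcs[OF equitable \<open>y < N\<close>])
  finally show ?thesis .
qed

lemma obtain_same_colour:
  assumes "class_size N c (c x) = class_size N c' (c x)" "x < N"
  obtains y where "y < N" "c' y = c x"
proof -
  have "0 < class_size N c' (c x)"
    using assms class_size_pos[of x N c] by linarith
  then show ?thesis using that unfolding class_size_def by (auto simp: card_gt_0_iff)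
qed

lemma doubly_stochastic_colour_match:
  assumes sizes: "\<And>a. class_size N c a = class_size N c' a"
  shows "doubly_stochastic N (\<lambda>x y. if c x = c' y then 1 / real (class_size N c (c x)) else 0)"
  unfolding doubly_stochastic_def
proof (intro conjI allI impI)
  fix i assume i: "i < N"
  have "{j. j < N \<and> c i = c' j} = {j. j < N \<and> c' j = c i}" by auto
  then have "(\<Sum>j<N. if c i = c' j then 1 / real (class_size N c (c i)) else 0)
          = real (class_size N c' (c i)) / real (class_size N c (c i))"
    by (simp add: sum_if_const_eq_card class_size_def)
  then show "(\<Sum>j<N. if c i = c' j then 1 / real (class_size N c (c i)) else 0) = 1"
    using sizes[of "c i"] class_size_pos[OF i, of c] by simp
next
  fix j assume j: "j < N"
  have "(\<Sum>i<N. if c i = c' j then 1 / real (class_size N c (c i)) else 0)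
          = (\<Sum>i<N. if c i = c' j then 1 / real (class_size N c (c' j)) else 0)"
    by (intro sum.cong) auto
  also have "\<dots> = real (class_size N c (c' j)) / real (class_size N c (c' j))"
    by (simp add: sum_if_const_eq_card class_size_def)
  finally show "(\<Sum>i<N. if c i = c' j then 1 / real (class_size N c (c i)) else 0) = 1"
    using sizes[of "c' j"] class_size_pos[OF j, of c'] by simp
qed simp

text \<open>Tinhofer's witness: S matches every vertex uniformly with the equally coloured vertices of
  the other graph.\<close>

theorem fractional_iso_of_common_equitable_colouring:
  assumes symE: "\<And>x y. E x y = E y x" and symE': "\<And>x y. E' x y = E' y x"
    and sizes: "\<And>a. class_size N c a = class_size N c' a"
    and degrees: "\<And>x y. x < N \<Longrightarrow> y < N \<Longrightarrow> c x = c' y \<Longrightarrow> colour_degree N E c x = colour_degree N E' c' y"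
  shows "\<exists>S. doubly_stochastic N S \<and>
           (\<forall>i<N. \<forall>j<N. (\<Sum>k<N. adj E i k * S k j) = (\<Sum>k<N. S i k * adj E' k j))"
proof (intro exI conjI allI impI)
  define m where "m a = real (class_size N c a)" for a
  define S where "S x y = (if c x = c' y then 1 / m (c x) else 0)" for x y
  show "doubly_stochastic N S"
    unfolding S_def m_def using sizes by (rule doubly_stochastic_colour_match)
  have equitable: "colour_degree N E c x = colour_degree N E c x'"
    if x: "x < N" "x' < N" "c x = c x'" for x x'
  proof -
    obtain y where y: "y < N" "c' y = c x" using obtain_same_colour[OF sizes x(1)] .
    show ?thesis using degrees[OF x(1) y(1)] degrees[OF x(2) y(1)] x(3) y(2) by simp
  qed
  fix i j assume i: "i < N" and j: "j < N"
  obtain z where z: "z < N" "c z = c' j"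
    using obtain_same_colour[of N c' j c, OF sizes[symmetric] j] by blast
  have "(\<Sum>k<N. adj E i k * S k j) = (\<Sum>k<N. if E i k \<and> c k = c' j then 1 / m (c' j) else 0)"
    unfolding S_def adj_def by (intro sum.cong) auto
  also have "\<dots> = real (colour_degree N E c i (c' j)) / m (c' j)"
    by (simp add: sum_if_const_eq_card colour_degree_def)
  also have "\<dots> = real (colour_degree N E c z (c i)) / m (c i)"
  proof -
    have "m (c i) * colour_degree N E c i (c z) = m (c z) * colour_degree N E c z (c i)"
      unfolding m_def using colour_degree_double_count[OF symE equitable i z(1)] by (metis of_nat_mult)
    moreover have "m (c i) \<noteq> 0" "m (c z) \<noteq> 0"
      unfolding m_def using class_size_pos[OF i, of c] class_size_pos[OF z(1), of c] by simp_all
    ultimately show ?thesis unfolding z(2)[symmetric] by (simp add: frac_eq_eq mult.commute)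
  qed
  also have "\<dots> = real (colour_degree N E' c' j (c i)) / m (c i)"
    using degrees[OF z(1) j z(2)] by simp
  also have "\<dots> = (\<Sum>k<N. if E' j k \<and> c' k = c i then 1 / m (c i) else 0)"
    by (simp add: sum_if_const_eq_card colour_degree_def)
  also have "\<dots> = (\<Sum>k<N. S i k * adj E' k j)"
    unfolding S_def adj_def by (intro sum.cong) (auto simp: symE'[of _ j])
  finally show "(\<Sum>k<N. adj E i k * S k j) = (\<Sum>k<N. S i k * adj E' k j)" .
qed

section \<open>Colour refinement\<close>

lemma size_filter_image_mset_set:
  "finite A \<Longrightarrow> size (filter_mset Q (image_mset f (mset_set A))) = card {x \<in> A. Q (f x)}"
  by (simp add: filter_mset_image_mset filter_mset_mset_set size_mset_set)

lemma wl_equiv_card_eq: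
  assumes "wl_equiv N E E'"
  shows "card {x. x < N \<and> Q (wl N E t x)} = card {x. x < N \<and> Q (wl N E' t x)}"
proof -
  have "size (filter_mset Q (image_mset (wl N E t) (mset_set {0..<N})))
      = size (filter_mset Q (image_mset (wl N E' t) (mset_set {0..<N})))"
    using assms unfolding wl_equiv_def by metis
  then show ?thesis
    by (simp add: size_filter_image_mset_set atLeast0LessThan lessThan_def)
qed

lemma wl_equiv_class_size:
  "wl_equiv N E E' \<Longrightarrow> class_size N (wl N E t) a = class_size N (wl N E' t) a"
  unfolding class_size_def by (rule wl_equiv_card_eq)

lemma wl_equiv_sym: "wl_equiv N G H \<Longrightarrow> wl_equiv N H G"
  unfolding wl_equiv_def by simp

lemma wl_Suc_eqD:
  assumes "wl N E (Suc t) x = wl N E' (Suc t) y"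
  shows "wl N E t x = wl N E' t y"
    and "colour_degree N E (wl N E t) x = colour_degree N E' (wl N E' t) y"
proof -
  show "wl N E t x = wl N E' t y" using assms by simp
  have nbrs: "image_mset (wl N E t) (mset_set {k. k < N \<and> E x k})
      = image_mset (wl N E' t) (mset_set {k. k < N \<and> E' y k})"
    using assms by simp
  show "colour_degree N E (wl N E t) x = colour_degree N E' (wl N E' t) y"
  proof
    fix b
    have "size (filter_mset (\<lambda>c. c = b) (image_mset (wl N E t) (mset_set {k. k < N \<and> E x k})))
        = size (filter_mset (\<lambda>c. c = b) (image_mset (wl N E' t) (mset_set {k. k < N \<and> E' y k})))"
      using nbrs by simp
    then show "colour_degree N E (wl N E t) x b = colour_degree N E' (wl N E' t) y b"
      by (simp add: size_filter_image_mset_set colour_degree_def conj_assoc)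
  qed
qed

fun wl_prev :: "wl_color \<Rightarrow> wl_color" where
  "wl_prev WL_Init = WL_Init"
| "wl_prev (WL_Step c M) = c"

lemma wl_prev_wl_Suc: "wl_prev (wl N E (Suc t) x) = wl N E t x"
  by simp

text \<open>The number of colours never decreases and is at most N, so some round adds no new colour;
  since every colour determines its predecessor, from that round on the partition is stable.\<close>

lemma wl_stable_round:
  "\<exists>t. \<forall>x<N. \<forall>y<N. wl N E t x = wl N E t y \<longrightarrow> wl N E (Suc t) x = wl N E (Suc t) y"
proof -
  define colours where "colours t = wl N E t ` {0..<N}" for t
  have prev: "colours t = wl_prev ` colours (Suc t)" for t
    unfolding colours_def image_image by simp
  have mono: "card (colours t) \<le> card (colours (Suc t))" for t
    using prev card_image_le[of "colours (Suc t)" wl_prev] unfolding colours_def by auto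
  have bounded: "card (colours t) \<le> N" for t
    unfolding colours_def using card_image_le[of "{0..<N}" "wl N E t"] by simp
  obtain t where t: "card (colours (Suc t)) \<le> card (colours t)"
  proof (rule ccontr)
    assume "\<not> thesis"
    then have "card (colours t) < card (colours (Suc t))" for t using that not_le by blast
    then have "t \<le> card (colours t)" for t
      by (induction t) (auto intro: Suc_leI le_less_trans)
    then show False using bounded[of "Suc N"] by (meson not_less_eq_eq)
  qed
  have inj: "inj_on wl_prev (colours (Suc t))"
    using t mono[of t] prev[of t]
    by (intro eq_card_imp_inj_on) (simp_all add: colours_def)
  show ?thesis
  proof (intro exI[of _ t] allI impI)
    fix x y assume "x < N" "y < N" "wl N E t x = wl N E t y"
    moreover have "wl N E (Suc t) x \<in> colours (Suc t)" "wl N E (Suc t) y \<in> colours (Suc t)"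
      using \<open>x < N\<close> \<open>y < N\<close> unfolding colours_def by (auto simp del: wl.simps)
    ultimately show "wl N E (Suc t) x = wl N E (Suc t) y"
      using inj_onD[OF inj, of "wl N E (Suc t) x" "wl N E (Suc t) y"] by (simp add: wl_prev_wl_Suc del: wl.simps)
  qed
qed

text \<open>At a stable round the next colour is a function of the current one; so a vertex y of E'
  has a vertex z of E with the same next colour, and both vertices then see the same multiset of
  neighbour colours.\<close>

lemma wl_equiv_common_equitable:
  assumes "wl_equiv N E E'"
  obtains t where "\<And>x y. x < N \<Longrightarrow> y < N \<Longrightarrow> wl N E t x = wl N E' t y \<Longrightarrow>
      colour_degree N E (wl N E t) x = colour_degree N E' (wl N E' t) y"
proof -
  obtain t where stable: "\<And>x y. x < N \<Longrightarrow> y < N \<Longrightarrow> wl N E t x = wl N E t y \<Longrightarrow>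
      wl N E (Suc t) x = wl N E (Suc t) y"
    using wl_stable_round[of N E] by blast
  have "colour_degree N E (wl N E t) x = colour_degree N E' (wl N E' t) y"
    if "x < N" "y < N" "wl N E t x = wl N E' t y" for x y
  proof -
    obtain z where z: "z < N" "wl N E (Suc t) z = wl N E' (Suc t) y"
      using obtain_same_colour[where c="wl N E' (Suc t)" and c'="wl N E (Suc t)" and x=y]
        wl_equiv_class_size[OF assms, symmetric] \<open>y < N\<close> by metis
    have "wl N E (Suc t) x = wl N E (Suc t) z"
      using stable[OF \<open>x < N\<close> z(1)] wl_Suc_eqD(1)[OF z(2)] that(3) by simp
    then show ?thesis using wl_Suc_eqD(2)[OF z(2)] wl_Suc_eqD(2)[of N E t x E z] by simp
  qed
  then show ?thesis using that by blast
qed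

theorem fractional_iso_of_wl_equiv:
  assumes "\<And>x y. E x y = E y x" "\<And>x y. E' x y = E' y x" and "wl_equiv N E E'"
  shows "\<exists>S. doubly_stochastic N S \<and>
           (\<forall>i<N. \<forall>j<N. (\<Sum>k<N. adj E i k * S k j) = (\<Sum>k<N. S i k * adj E' k j))"
proof -
  obtain t where common: "\<And>x y. x < N \<Longrightarrow> y < N \<Longrightarrow> wl N E t x = wl N E' t y \<Longrightarrow>
      colour_degree N E (wl N E t) x = colour_degree N E' (wl N E' t) y"
    using wl_equiv_common_equitable[OF assms(3)] by blast
  show ?thesis
    by (rule fractional_iso_of_common_equitable_colouring[of E E' N "wl N E t" "wl N E' t",
          OF assms(1,2) wl_equiv_class_size[OF assms(3)] common])
qed

section \<open>Tree distance of perturbed graphs\<close>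

lemma abs_weighted_sum_diff_le:
  fixes X Y :: "nat \<Rightarrow> nat \<Rightarrow> real"
  assumes X: "\<And>i k. 0 \<le> X i k" "(\<Sum>i<N. \<Sum>k<N. X i k) \<le> c"
    and Y: "\<And>i k. 0 \<le> Y i k" "(\<Sum>i<N. \<Sum>k<N. Y i k) \<le> c"
    and W: "\<And>k. k < N \<Longrightarrow> 0 \<le> W k \<and> W k \<le> 1" and I: "I \<subseteq> {0..<N}"
  shows "\<bar>\<Sum>i\<in>I. \<Sum>k<N. (X i k - Y i k) * W k\<bar> \<le> c"
proof -
  have bounds: "0 \<le> (\<Sum>i\<in>I. \<Sum>k<N. Z i k * W k) \<and> (\<Sum>i\<in>I. \<Sum>k<N. Z i k * W k) \<le> c"
    if Z: "\<And>i k. 0 \<le> Z i k" "(\<Sum>i<N. \<Sum>k<N. Z i k) \<le> c" for Z :: "nat \<Rightarrow> nat \<Rightarrow> real"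
  proof
    show "0 \<le> (\<Sum>i\<in>I. \<Sum>k<N. Z i k * W k)"
      using Z W by (intro sum_nonneg) auto
    have "(\<Sum>i\<in>I. \<Sum>k<N. Z i k * W k) \<le> (\<Sum>i\<in>I. \<Sum>k<N. Z i k)"
      using Z W by (intro sum_mono) (auto intro: mult_left_le)
    also have "\<dots> \<le> (\<Sum>i<N. \<Sum>k<N. Z i k)"
      using I Z by (intro sum_mono2) (auto intro: sum_nonneg)
    finally show "(\<Sum>i\<in>I. \<Sum>k<N. Z i k * W k) \<le> c" using Z by simp
  qed
  have "(\<Sum>i\<in>I. \<Sum>k<N. (X i k - Y i k) * W k)
      = (\<Sum>i\<in>I. \<Sum>k<N. X i k * W k) - (\<Sum>i\<in>I. \<Sum>k<N. Y i k * W k)"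
    by (simp add: left_diff_distrib sum_subtractf)
  then show ?thesis using bounds[OF X] bounds[OF Y] by linarith
qed

lemma abs_cut_sum_right_perturbation_le:
  fixes X Y :: "nat \<Rightarrow> nat \<Rightarrow> real"
  assumes X: "\<And>i k. 0 \<le> X i k" "(\<Sum>i<N. \<Sum>k<N. X i k) \<le> c"
    and Y: "\<And>i k. 0 \<le> Y i k" "(\<Sum>i<N. \<Sum>k<N. Y i k) \<le> c"
    and S: "doubly_stochastic N S" and I: "I \<subseteq> {0..<N}" and J: "J \<subseteq> {0..<N}"
  shows "\<bar>\<Sum>i\<in>I. \<Sum>j\<in>J. \<Sum>k<N. (X i k - Y i k) * S k j\<bar> \<le> c"
proof -
  have "(\<Sum>j\<in>J. \<Sum>k<N. (X i k - Y i k) * S k j) = (\<Sum>k<N. (X i k - Y i k) * (\<Sum>j\<in>J. S k j))" for i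
    by (subst sum.swap) (simp add: sum_distrib_left)
  then show ?thesis
    using abs_weighted_sum_diff_le[OF X Y _ I, of "\<lambda>k. \<Sum>j\<in>J. S k j"]
      doubly_stochastic_partial_row_sum[OF S J] by simp
qed

lemma abs_cut_sum_left_perturbation_le:
  fixes X Y :: "nat \<Rightarrow> nat \<Rightarrow> real"
  assumes X: "\<And>i k. 0 \<le> X i k" "(\<Sum>i<N. \<Sum>k<N. X i k) \<le> c"
    and Y: "\<And>i k. 0 \<le> Y i k" "(\<Sum>i<N. \<Sum>k<N. Y i k) \<le> c"
    and S: "doubly_stochastic N S" and I: "I \<subseteq> {0..<N}" and J: "J \<subseteq> {0..<N}"
  shows "\<bar>\<Sum>i\<in>I. \<Sum>j\<in>J. \<Sum>k<N. S i k * (X k j - Y k j)\<bar> \<le> c"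
proof -
  have "(\<Sum>i\<in>I. \<Sum>j\<in>J. \<Sum>k<N. S i k * (X k j - Y k j))
      = (\<Sum>j\<in>J. \<Sum>i\<in>I. \<Sum>k<N. (X k j - Y k j) * S i k)"
    by (subst sum.swap) (simp add: mult.commute)
  also have "\<bar>\<dots>\<bar> \<le> c"
    using X Y by (intro abs_cut_sum_right_perturbation_le[OF _ _ _ _ doubly_stochastic_transpose[OF S] J I])
      (auto simp: sum.swap[of "\<lambda>i k. X k i"] sum.swap[of "\<lambda>i k. Y k i"])
  finally show ?thesis .
qed

definition arc_surplus :: "nat \<Rightarrow> graph \<Rightarrow> graph \<Rightarrow> nat" where
  "arc_surplus N G H = card {(i, k). i < N \<and> k < N \<and> G i k \<and> \<not> H i k}"

lemma sum_indicator_arc_surplus: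
  "(\<Sum>i<N. \<Sum>k<N. if G i k \<and> \<not> H i k then 1 else 0) = real (arc_surplus N G H)"
proof -
  have "(\<Sum>i<N. \<Sum>k<N. if G i k \<and> \<not> H i k then 1 else 0)
      = (\<Sum>z\<in>{..<N} \<times> {..<N}. if G (fst z) (snd z) \<and> \<not> H (fst z) (snd z) then 1 else (0::real))"
    by (simp add: sum.cartesian_product split_beta)
  also have "\<dots> = (\<Sum>z\<in>{(i, k). i < N \<and> k < N \<and> G i k \<and> \<not> H i k}. 1)"
    by (rule sum.mono_neutral_cong_right) auto
  finally show ?thesis by (simp add: arc_surplus_def)
qed

text \<open>Write adj G = adj K + X1 - Y1 and adj H = adj K' - X2 + Y2 with 0/1-matrices of mass
  at most c; the terms of adj K, adj K' cancel against S, and each of the remaining two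
  contributes at most c to every cut sum.\<close>

lemma tree_dist_le_perturbed_fractional_iso:
  fixes c :: nat
  assumes S: "doubly_stochastic N S"
    and comm: "\<And>i j. i < N \<Longrightarrow> j < N \<Longrightarrow> (\<Sum>k<N. adj K i k * S k j) = (\<Sum>k<N. S i k * adj K' k j)"
    and "arc_surplus N G K \<le> c" "arc_surplus N K G \<le> c"
    and "arc_surplus N K' H \<le> c" "arc_surplus N H K' \<le> c"
  shows "tree_dist N G H \<le> 2 * real c"
proof -
  define X1 where "X1 i k = (if G i k \<and> \<not> K i k then 1 else 0 :: real)" for i k
  define Y1 where "Y1 i k = (if K i k \<and> \<not> G i k then 1 else 0 :: real)" for i k
  define X2 where "X2 i k = (if K' i k \<and> \<not> H i k then 1 else 0 :: real)" for i k
  define Y2 where "Y2 i k = (if H i k \<and> \<not> K' i k then 1 else 0 :: real)" for i k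
  have mass: "\<And>i k. 0 \<le> X1 i k" "(\<Sum>i<N. \<Sum>k<N. X1 i k) \<le> c"
    "\<And>i k. 0 \<le> Y1 i k" "(\<Sum>i<N. \<Sum>k<N. Y1 i k) \<le> c"
    "\<And>i k. 0 \<le> X2 i k" "(\<Sum>i<N. \<Sum>k<N. X2 i k) \<le> c"
    "\<And>i k. 0 \<le> Y2 i k" "(\<Sum>i<N. \<Sum>k<N. Y2 i k) \<le> c"
    using assms(3-6) unfolding X1_def Y1_def X2_def Y2_def sum_indicator_arc_surplus by auto
  have entry: "(\<Sum>k<N. adj G i k * S k j) - (\<Sum>k<N. S i k * adj H k j)
      = (\<Sum>k<N. (X1 i k - Y1 i k) * S k j) + (\<Sum>k<N. S i k * (X2 k j - Y2 k j))"
    if "i < N" "j < N" for i j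
  proof -
    have "adj G i k = adj K i k + (X1 i k - Y1 i k)" "adj H k j = adj K' k j - (X2 k j - Y2 k j)" for k
      unfolding adj_def X1_def Y1_def X2_def Y2_def by auto
    then have "(\<Sum>k<N. adj G i k * S k j) = (\<Sum>k<N. adj K i k * S k j) + (\<Sum>k<N. (X1 i k - Y1 i k) * S k j)"
        "(\<Sum>k<N. S i k * adj H k j) = (\<Sum>k<N. S i k * adj K' k j) - (\<Sum>k<N. S i k * (X2 k j - Y2 k j))"
      by (simp_all only: distrib_right right_diff_distrib sum.distrib sum_subtractf)
    then show ?thesis using comm[OF that] by simp
  qed
  have "cut_norm N (\<lambda>i j. (\<Sum>k<N. adj G i k * S k j) - (\<Sum>k<N. S i k * adj H k j)) \<le> c + c"
  proof (rule cut_norm_le)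
    fix I J assume I: "I \<subseteq> {0..<N}" and J: "J \<subseteq> {0..<N}"
    have "(\<Sum>i\<in>I. \<Sum>j\<in>J. (\<Sum>k<N. adj G i k * S k j) - (\<Sum>k<N. S i k * adj H k j))
        = (\<Sum>i\<in>I. \<Sum>j\<in>J. \<Sum>k<N. (X1 i k - Y1 i k) * S k j)
          + (\<Sum>i\<in>I. \<Sum>j\<in>J. \<Sum>k<N. S i k * (X2 k j - Y2 k j))"
      using I J entry by (auto simp: sum.distrib subset_iff intro!: sum.cong)
    then show "\<bar>\<Sum>i\<in>I. \<Sum>j\<in>J. (\<Sum>k<N. adj G i k * S k j) - (\<Sum>k<N. S i k * adj H k j)\<bar> \<le> c + c"
      using abs_cut_sum_right_perturbation_le[OF mass(1-4) S I J]
        abs_cut_sum_left_perturbation_le[OF mass(5-8) S I J] by linarith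
  qed
  then show ?thesis using tree_dist_le[OF S, of G H] by linarith
qed

section \<open>Invariants of colour refinement\<close>

lemma wl_relabel:
  assumes bij: "bij_betw \<sigma> {0..<N} {0..<N}"
    and EL: "\<And>a b. a < N \<Longrightarrow> b < N \<Longrightarrow> E (\<sigma> a) (\<sigma> b) = L a b"
  shows "a < N \<Longrightarrow> wl N E t (\<sigma> a) = wl N L t a"
proof (induction t arbitrary: a)
  case 0 then show ?case by simp
next
  case (Suc t)
  have inj: "inj_on \<sigma> {b. b < N \<and> L a b}"
    using bij unfolding bij_betw_def by (auto intro: inj_on_subset)
  have nbrs: "{w. w < N \<and> E (\<sigma> a) w} = \<sigma> ` {b. b < N \<and> L a b}"
  proof
    show "{w. w < N \<and> E (\<sigma> a) w} \<subseteq> \<sigma> ` {b. b < N \<and> L a b}"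
    proof
      fix w assume w: "w \<in> {w. w < N \<and> E (\<sigma> a) w}"
      then have "w \<in> \<sigma> ` {0..<N}" using bij unfolding bij_betw_def by auto
      then obtain b where "b < N" "w = \<sigma> b" by auto
      then show "w \<in> \<sigma> ` {b. b < N \<and> L a b}" using w EL[OF Suc.prems] by auto
    qed
    show "\<sigma> ` {b. b < N \<and> L a b} \<subseteq> {w. w < N \<and> E (\<sigma> a) w}"
      using bij EL[OF Suc.prems] unfolding bij_betw_def by auto
  qed
  have "image_mset (wl N E t) (mset_set {w. w < N \<and> E (\<sigma> a) w})
      = image_mset (\<lambda>b. wl N E t (\<sigma> b)) (mset_set {b. b < N \<and> L a b})"
    by (simp add: nbrs image_mset_mset_set[OF inj, symmetric] multiset.map_comp o_def)
  also have "\<dots> = image_mset (wl N L t) (mset_set {b. b < N \<and> L a b})"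
    using Suc.IH by (intro image_mset_cong) simp
  finally show ?case using Suc by simp
qed

lemma wl_equiv_relabel:
  assumes bij: "bij_betw \<sigma> {0..<N} {0..<N}"
    and "\<And>a b. a < N \<Longrightarrow> b < N \<Longrightarrow> E (\<sigma> a) (\<sigma> b) = L a b"
    and "\<And>a b. a < N \<Longrightarrow> b < N \<Longrightarrow> E' (\<sigma> a) (\<sigma> b) = L' a b"
  shows "wl_equiv N E E' \<longleftrightarrow> wl_equiv N L L'"
proof -
  have vertices: "mset_set {0..<N} = image_mset \<sigma> (mset_set {0..<N})"
    using bij image_mset_mset_set[of \<sigma> "{0..<N}"] unfolding bij_betw_def by simp
  have relabel: "image_mset (wl N G t) (mset_set {0..<N}) = image_mset (wl N K t) (mset_set {0..<N})"
    if "\<And>a b. a < N \<Longrightarrow> b < N \<Longrightarrow> G (\<sigma> a) (\<sigma> b) = K a b" for G K t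
  proof -
    have "image_mset (wl N G t) (mset_set {0..<N}) = image_mset (\<lambda>a. wl N G t (\<sigma> a)) (mset_set {0..<N})"
      by (subst vertices) (simp add: multiset.map_comp o_def)
    also have "\<dots> = image_mset (wl N K t) (mset_set {0..<N})"
      using wl_relabel[of \<sigma> N G K, OF bij that] by (intro image_mset_cong) simp
    finally show ?thesis .
  qed
  show ?thesis
    using relabel[where G=E and K=L, OF assms(2)] relabel[where G=E' and K=L', OF assms(3)]
    unfolding wl_equiv_def by auto
qed

definition degree :: "nat \<Rightarrow> graph \<Rightarrow> nat \<Rightarrow> nat" where
  "degree N E x = card {w. w < N \<and> E x w}"

fun reach_within :: "nat \<Rightarrow> graph \<Rightarrow> nat \<Rightarrow> nat \<Rightarrow> nat \<Rightarrow> bool" where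
  "reach_within N E 0 x y \<longleftrightarrow> x = y"
| "reach_within N E (Suc s) x y \<longleftrightarrow> reach_within N E s x y \<or> (\<exists>z<N. E x z \<and> reach_within N E s z y)"

lemma reach_within_mono: "reach_within N E s x y \<Longrightarrow> s \<le> s' \<Longrightarrow> reach_within N E s' x y"
  by (induction s') (auto simp: le_Suc_eq)

lemma reach_within_snoc:
  "reach_within N E s x y \<Longrightarrow> E y z \<Longrightarrow> z < N \<Longrightarrow> reach_within N E (Suc s) x z"
  by (induction s arbitrary: x) auto

lemma reach_within_subgraph:
  "reach_within N E s x y \<Longrightarrow> (\<And>a b. E a b \<Longrightarrow> E' a b) \<Longrightarrow> reach_within N E' s x y"
  by (induction s arbitrary: x) auto

definition near_degree :: "nat \<Rightarrow> graph \<Rightarrow> nat \<Rightarrow> nat \<Rightarrow> nat \<Rightarrow> bool" where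
  "near_degree N E d s x \<longleftrightarrow> (\<exists>w<N. reach_within N E s x w \<and> degree N E w = d)"

text \<open>Two properties of a vertex that 1-WL reads off its colour: the degree (after one round) and
  whether a vertex of degree d lies within distance s (after more than s rounds).\<close>

fun colour_nbr_count :: "wl_color \<Rightarrow> nat" where
  "colour_nbr_count WL_Init = 0"
| "colour_nbr_count (WL_Step c M) = size M"

fun colour_sees_degree :: "nat \<Rightarrow> nat \<Rightarrow> wl_color \<Rightarrow> bool" where
  "colour_sees_degree d 0 c \<longleftrightarrow> colour_nbr_count c = d"
| "colour_sees_degree d (Suc s) WL_Init \<longleftrightarrow> False"
| "colour_sees_degree d (Suc s) (WL_Step c M) \<longleftrightarrow>
     colour_sees_degree d s c \<or> (\<exists>c'\<in>#M. colour_sees_degree d s c')"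

lemma colour_nbr_count_wl: "colour_nbr_count (wl N E (Suc t) x) = degree N E x"
  by (simp add: degree_def size_mset_set)

lemma colour_sees_degree_wl:
  assumes "s < t" "x < N"
  shows "colour_sees_degree d s (wl N E t x) \<longleftrightarrow> near_degree N E d s x"
  unfolding near_degree_def using assms
proof (induction s arbitrary: t x)
  case 0
  then obtain t' where "t = Suc t'" by (cases t) auto
  then show ?case using 0 by (auto simp: degree_def size_mset_set)
next
  case (Suc s)
  then obtain t' where t: "t = Suc t'" and "s < t'" by (cases t) auto
  have "colour_sees_degree d (Suc s) (wl N E t x) \<longleftrightarrow>
        colour_sees_degree d s (wl N E t' x) \<or> (\<exists>z\<in>{w. w < N \<and> E x w}. colour_sees_degree d s (wl N E t' z))"
    by (simp add: t)
  also have "\<dots> \<longleftrightarrow> (\<exists>w<N. reach_within N E s x w \<and> degree N E w = d) \<or>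
        (\<exists>z\<in>{w. w < N \<and> E x w}. \<exists>w<N. reach_within N E s z w \<and> degree N E w = d)"
    using Suc.IH[OF \<open>s < t'\<close>] Suc.prems by auto
  also have "\<dots> \<longleftrightarrow> (\<exists>w<N. reach_within N E (Suc s) x w \<and> degree N E w = d)"
    by auto
  finally show ?case .
qed

lemma wl_equiv_card_degree_eq:
  assumes "wl_equiv N G H"
  shows "card {x. x < N \<and> degree N G x = d} = card {x. x < N \<and> degree N H x = d}"
  using wl_equiv_card_eq[OF assms, where Q="\<lambda>c. colour_nbr_count c = d" and t="Suc 0"]
  by (simp only: colour_nbr_count_wl)

lemma wl_equiv_card_degree_not_near_eq:
  assumes "wl_equiv N G H"
  shows "card {x. x < N \<and> degree N G x = d \<and> \<not> near_degree N G d' s x}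
       = card {x. x < N \<and> degree N H x = d \<and> \<not> near_degree N H d' s x}"
proof -
  have "{x. x < N \<and> degree N K x = d \<and> \<not> near_degree N K d' s x}
      = {x. x < N \<and> colour_nbr_count (wl N K (Suc s) x) = d \<and> \<not> colour_sees_degree d' s (wl N K (Suc s) x)}"
    for K
    using colour_nbr_count_wl colour_sees_degree_wl[of s "Suc s"] by auto
  then show ?thesis
    using wl_equiv_card_eq[OF assms, where Q="\<lambda>c. colour_nbr_count c = d \<and> \<not> colour_sees_degree d' s c"
        and t="Suc s"]
    by (simp only:)
qed

section \<open>Attaching an edge to a path\<close>

text \<open>A graph of F_n before relabelling: P_n on the positions 0..<n, the path forest P on
  n..<2n (a path ends after each position in B) and the extra edge u v.\<close>

definition path_arc :: "nat \<Rightarrow> nat set \<Rightarrow> nat \<Rightarrow> nat \<Rightarrow> bool" where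
  "path_arc n B a b \<longleftrightarrow> b = Suc a \<and> (Suc a < n \<or> (n \<le> a \<and> Suc a < 2*n \<and> a \<notin> B))"

definition layout :: "nat \<Rightarrow> nat set \<Rightarrow> nat \<Rightarrow> nat \<Rightarrow> graph" where
  "layout n B u v a b \<longleftrightarrow> path_arc n B a b \<or> path_arc n B b a \<or> (a = u \<and> b = v) \<or> (b = u \<and> a = v)"

definition path_forest :: "nat \<Rightarrow> nat set \<Rightarrow> graph" where
  "path_forest n B a b \<longleftrightarrow> n \<le> a \<and> n \<le> b \<and> (path_arc n B a b \<or> path_arc n B b a)"

context
  fixes n :: nat and B :: "nat set" and u :: nat
  assumes u: "n \<le> u" "u < 2*n"
begin

private abbreviation "lay j \<equiv> layout n B u j"

lemma layout_nbrs_low: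
  assumes x: "x < n" and j: "j < n"
  shows "{w. w < 2*n \<and> lay j x w} =
    (if Suc x < n then {Suc x} else {}) \<union> (if 0 < x then {x - 1} else {}) \<union> (if x = j then {u} else {})"
  using x j u unfolding layout_def path_arc_def by (auto split: if_splits)

lemma degree_layout_low:
  assumes x: "x < n" and j: "j < n"
  shows "degree (2*n) (lay j) x = (if Suc x < n then 1 else 0) + (if 0 < x then 1 else 0) + (if x = j then 1 else 0)"
proof -
  have "degree (2*n) (lay j) x = card ((if Suc x < n then {Suc x} else {}) \<union> (if 0 < x then {x - 1} else {}) \<union> (if x = j then {u} else {}))"
    unfolding degree_def layout_nbrs_low[OF x j] ..
  also have "\<dots> = card ((if Suc x < n then {Suc x} else {}) \<union> (if 0 < x then {x - 1} else {})) + card (if x = j then {u} else {})"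
    using x u by (intro card_Un_disjoint) auto
  also have "card ((if Suc x < n then {Suc x} else {}) \<union> (if 0 < x then {x - 1} else {})) =
     card (if Suc x < n then {Suc x} else {}) + card (if 0 < x then {x - 1} else {})"
    by (intro card_Un_disjoint) auto
  finally show ?thesis by simp
qed

lemma layout_nbrs_high:
  assumes x: "n \<le> x" and j: "j < n"
  shows "{w. w < 2*n \<and> lay j x w} = {w. w < 2*n \<and> path_forest n B x w} \<union> (if x = u then {j} else {})"
  using x j u unfolding layout_def path_forest_def path_arc_def by (auto split: if_splits)

lemma degree_layout_high:
  assumes x: "n \<le> x" and j: "j < n"
  shows "degree (2*n) (lay j) x = degree (2*n) (path_forest n B) x + (if x = u then 1 else 0)"
proof -
  have "degree (2*n) (lay j) x = card ({w. w < 2*n \<and> path_forest n B x w} \<union> (if x = u then {j} else {}))"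
    unfolding degree_def layout_nbrs_high[OF x j] ..
  also have "\<dots> = card {w. w < 2*n \<and> path_forest n B x w} + card (if x = u then {j} else {})"
    using x j by (intro card_Un_disjoint) (auto simp: path_forest_def)
  finally show ?thesis by (simp add: degree_def)
qed

lemma reach_within_layout_low: "x < n \<Longrightarrow> j + s < x \<Longrightarrow> reach_within (2*n) (lay j) s x w \<Longrightarrow> w < n \<and> x \<le> w + s"
proof (induction s arbitrary: x)
  case 0 then show ?case by simp
next
  case (Suc s)
  from Suc.prems(3) consider "reach_within (2*n) (lay j) s x w" | z where "z < 2*n" "lay j x z" "reach_within (2*n) (lay j) s z w" by auto
  then show ?case
  proof cases
    case 1 then show ?thesis using Suc by fastforce
  next
    case 2
    have "z = Suc x \<and> Suc x < n \<or> Suc z = x" using 2(2) Suc.prems u unfolding layout_def path_arc_def by auto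
    then have "z < n" "j + s < z" "x \<le> Suc z" using Suc.prems by auto
    then show ?thesis using Suc.IH[of z] 2(3) Suc.prems by auto
  qed
qed

lemma reach_within_layout_up: "a + k < n \<Longrightarrow> reach_within (2*n) (lay j) k a (a + k)"
proof (induction k)
  case 0 then show ?case by simp
next
  case (Suc k)
  have "lay j (a + k) (Suc (a + k))" using Suc.prems unfolding layout_def path_arc_def by auto
  then show ?case using reach_within_snoc[OF Suc.IH] Suc.prems by auto
qed

lemma reach_within_layout_down: "a + k < n \<Longrightarrow> reach_within (2*n) (lay j) k (a + k) a"
proof (induction k arbitrary: a)
  case 0 then show ?case by simp
next
  case (Suc k)
  have "reach_within (2*n) (lay j) k (Suc a + k) (Suc a)" using Suc.IH[of "Suc a"] Suc.prems by auto
  moreover have "lay j (Suc a) a" using Suc.prems unfolding layout_def path_arc_def by auto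
  ultimately show ?case using reach_within_snoc[of "2*n" "lay j" k "Suc a + k" "Suc a" a] Suc.prems by auto
qed

lemma reach_within_layout_high:
  "n \<le> x \<Longrightarrow> j < n \<Longrightarrow> reach_within (2*n) (lay j) s x w \<Longrightarrow>
     (n \<le> w \<and> reach_within (2*n) (path_forest n B) s x w) \<or> (\<exists>s'<s. reach_within (2*n) (path_forest n B) s' x u)"
proof (induction s arbitrary: x)
  case 0 then show ?case by simp
next
  case (Suc s)
  from Suc.prems(3) consider "reach_within (2*n) (lay j) s x w" | z where "z < 2*n" "lay j x z" "reach_within (2*n) (lay j) s z w" by auto
  then show ?case
  proof cases
    case 1
    then have "(n \<le> w \<and> reach_within (2*n) (path_forest n B) s x w) \<or> (\<exists>s'<s. reach_within (2*n) (path_forest n B) s' x u)"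
      using Suc by blast
    then show ?thesis by auto
  next
    case 2
    show ?thesis
    proof (cases "n \<le> z")
      case True
      have I: "path_forest n B x z" using 2(2) True Suc.prems unfolding layout_def path_forest_def by auto
      have "(n \<le> w \<and> reach_within (2*n) (path_forest n B) s z w) \<or> (\<exists>s'<s. reach_within (2*n) (path_forest n B) s' z u)"
        using Suc.IH[OF True Suc.prems(2) 2(3)] .
      then show ?thesis
      proof
        assume "n \<le> w \<and> reach_within (2*n) (path_forest n B) s z w"
        then show ?thesis using I 2(1) by auto
      next
        assume "\<exists>s'<s. reach_within (2*n) (path_forest n B) s' z u"
        then obtain s' where "s' < s" "reach_within (2*n) (path_forest n B) s' z u" by blast
        then have "Suc s' < Suc s" "reach_within (2*n) (path_forest n B) (Suc s') x u" using I 2(1) by auto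
        then show ?thesis by blast
      qed
    next
      case False
      then have "x = u" using 2(2) Suc.prems u unfolding layout_def path_arc_def by auto
      then show ?thesis by auto
    qed
  qed
qed

lemma near_degree_3_layout_high_iff:
  assumes x: "n \<le> x" and j: "0 < j" "Suc j < n"
  shows "near_degree (2*n) (lay j) 3 s x \<longleftrightarrow>
     (\<exists>w<(2*n). n \<le> w \<and> reach_within (2*n) (path_forest n B) s x w \<and>
        degree (2*n) (path_forest n B) w + (if w = u then 1 else 0) = 3)
     \<or> (\<exists>s'<s. reach_within (2*n) (path_forest n B) s' x u)"
  unfolding near_degree_def
proof
  assume "\<exists>w<(2*n). reach_within (2*n) (lay j) s x w \<and> degree (2*n) (lay j) w = 3"
  then obtain w where w: "w < 2*n" "reach_within (2*n) (lay j) s x w" "degree (2*n) (lay j) w = 3" by blast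
  then show "(\<exists>w<(2*n). n \<le> w \<and> reach_within (2*n) (path_forest n B) s x w \<and>
        degree (2*n) (path_forest n B) w + (if w = u then 1 else 0) = 3)
     \<or> (\<exists>s'<s. reach_within (2*n) (path_forest n B) s' x u)"
    using reach_within_layout_high[OF x _ w(2)] degree_layout_high[of w j] j by auto
next
  have forest: "\<And>a b. path_forest n B a b \<Longrightarrow> lay j a b" unfolding path_forest_def layout_def by auto
  have degree_j: "degree (2*n) (lay j) j = 3" using degree_layout_low[of j j] j by simp
  assume "(\<exists>w<(2*n). n \<le> w \<and> reach_within (2*n) (path_forest n B) s x w \<and>
        degree (2*n) (path_forest n B) w + (if w = u then 1 else 0) = 3)
     \<or> (\<exists>s'<s. reach_within (2*n) (path_forest n B) s' x u)"
  then show "\<exists>w<(2*n). reach_within (2*n) (lay j) s x w \<and> degree (2*n) (lay j) w = 3"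
  proof
    assume "\<exists>w<(2*n). n \<le> w \<and> reach_within (2*n) (path_forest n B) s x w \<and>
        degree (2*n) (path_forest n B) w + (if w = u then 1 else 0) = 3"
    then show ?thesis using reach_within_subgraph[OF _ forest] degree_layout_high j by fastforce
  next
    assume "\<exists>s'<s. reach_within (2*n) (path_forest n B) s' x u"
    then obtain s' where s': "s' < s" "reach_within (2*n) (path_forest n B) s' x u" by blast
    have "lay j u j" by (simp add: layout_def)
    then have "reach_within (2*n) (lay j) (Suc s') x j"
      using reach_within_snoc[OF reach_within_subgraph[of "2*n" _ s' x u "lay j", OF s'(2) forest]] j by simp
    then have "reach_within (2*n) (lay j) s x j" using reach_within_mono s' by (metis Suc_leI)
    then show ?thesis using degree_j j by (intro exI[of _ j]) auto
  qed
qed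

lemma degree_layout_low_eq_3_iff:
  assumes "x < n" "j < n"
  shows "degree (2*n) (lay j) x = 3 \<longleftrightarrow> x = j \<and> 0 < j \<and> Suc j < n"
  using degree_layout_low[OF assms] assms by auto

lemma degree_layout_low_eq_1_iff:
  assumes "x < n" "0 < j" "Suc j < n"
  shows "degree (2*n) (lay j) x = 1 \<longleftrightarrow> x = 0 \<or> x = n - 1"
  using degree_layout_low[OF assms(1), of j] assms by auto

lemma near_degree_3_layout_start:
  assumes "0 < j" "Suc j < n" "j \<le> s"
  shows "near_degree (2*n) (lay j) 3 s 0"
proof -
  have "reach_within (2*n) (lay j) s 0 j"
    using reach_within_layout_up[of 0 j j] reach_within_mono assms by auto
  then show ?thesis
    unfolding near_degree_def using degree_layout_low_eq_3_iff[of j j] assms by (intro exI[of _ j]) auto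
qed

lemma near_degree_3_layout_end_iff:
  assumes "0 < j" "Suc j < n"
  shows "near_degree (2*n) (lay j) 3 s (n - 1) \<longleftrightarrow> n - 1 \<le> j + s"
proof
  assume "near_degree (2*n) (lay j) 3 s (n - 1)"
  then obtain w where "w < 2*n" "reach_within (2*n) (lay j) s (n - 1) w" "degree (2*n) (lay j) w = 3"
    unfolding near_degree_def by blast
  then show "n - 1 \<le> j + s"
    using reach_within_layout_low[of "n - 1" j s w] degree_layout_low_eq_3_iff[of w j] assms
    by (cases "j + s < n - 1") auto
next
  assume "n - 1 \<le> j + s"
  then have "reach_within (2*n) (lay j) s (j + (n - 1 - j)) j"
    using reach_within_layout_down[of j "n - 1 - j" j] reach_within_mono assms by auto
  then show "near_degree (2*n) (lay j) 3 s (n - 1)"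
    unfolding near_degree_def using degree_layout_low_eq_3_iff[of j j] assms by (intro exI[of _ j]) auto
qed

lemma card_split_low_high:
  "card {x. x < 2*n \<and> P x} = card {x. x < n \<and> P x} + card {x. n \<le> x \<and> x < 2*n \<and> P x}"
proof -
  have "{x. x < 2*n \<and> P x} = {x. x < n \<and> P x} \<union> {x. n \<le> x \<and> x < 2*n \<and> P x}" by auto
  moreover have "card ({x. x < n \<and> P x} \<union> {x. n \<le> x \<and> x < 2*n \<and> P x})
      = card {x. x < n \<and> P x} + card {x. n \<le> x \<and> x < 2*n \<and> P x}"
    by (rule card_Un_disjoint) auto
  ultimately show ?thesis by simp
qed

text \<open>Attaching the extra edge at the end of P_n creates no vertex of degree 3 there.\<close>

lemma layout_start_not_wl_equiv:
  assumes j: "0 < j" "Suc j < n"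
  shows "\<not> wl_equiv (2*n) (lay 0) (lay j)"
proof
  assume "wl_equiv (2*n) (lay 0) (lay j)"
  then have "card {x. x < 2*n \<and> degree (2*n) (lay 0) x = 3} = card {x. x < 2*n \<and> degree (2*n) (lay j) x = 3}"
    by (rule wl_equiv_card_degree_eq)
  moreover have "{x. x < n \<and> degree (2*n) (lay 0) x = 3} = {}" "{x. x < n \<and> degree (2*n) (lay j) x = 3} = {j}"
    using degree_layout_low_eq_3_iff j by auto
  moreover have "{x. n \<le> x \<and> x < 2*n \<and> degree (2*n) (lay 0) x = 3} = {x. n \<le> x \<and> x < 2*n \<and> degree (2*n) (lay j) x = 3}"
    using degree_layout_high j by auto
  ultimately show False
    unfolding card_split_low_high[of "\<lambda>x. degree (2*n) (lay 0) x = 3"] card_split_low_high[of "\<lambda>x. degree (2*n) (lay j) x = 3"]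
    by simp
qed

text \<open>Count the leaves with no vertex of degree 3 within distance s = n - 1 - j': for the edge
  at j the leaf n - 1 is such a leaf, for the edge at j' no leaf of P_n is; the forest part
  looks the same from both graphs.\<close>

lemma layout_not_wl_equiv:
  assumes j: "0 < j" "j < j'" "2 * j' < n"
  shows "\<not> wl_equiv (2*n) (lay j) (lay j')"
proof
  assume eq: "wl_equiv (2*n) (lay j) (lay j')"
  define s where "s = n - 1 - j'"
  define far_leaf where "far_leaf k x \<longleftrightarrow> degree (2*n) (lay k) x = 1 \<and> \<not> near_degree (2*n) (lay k) 3 s x" for k x
  have jj: "Suc j < n" "0 < j'" "Suc j' < n" "j \<le> s" "j' \<le> s" using j unfolding s_def by auto
  have count: "card {x. x < 2*n \<and> far_leaf j x} = card {x. x < 2*n \<and> far_leaf j' x}"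
    unfolding far_leaf_def by (rule wl_equiv_card_degree_not_near_eq[OF eq])
  have high: "{x. n \<le> x \<and> x < 2*n \<and> far_leaf j x} = {x. n \<le> x \<and> x < 2*n \<and> far_leaf j' x}"
    unfolding far_leaf_def
    using degree_layout_high near_degree_3_layout_high_iff[OF _ j(1) jj(1)]
      near_degree_3_layout_high_iff[OF _ jj(2) jj(3)] jj by auto
  have low: "{x. x < n \<and> far_leaf k x} = {x. (x = 0 \<or> x = n - 1) \<and> \<not> near_degree (2*n) (lay k) 3 s x}"
    if "0 < k" "Suc k < n" for k
    unfolding far_leaf_def using degree_layout_low_eq_1_iff[OF _ that] that by auto
  have low_j: "{x. x < n \<and> far_leaf j x} = {n - 1}"
  proof -
    have "\<not> near_degree (2*n) (lay j) 3 s (n - 1)"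
      using near_degree_3_layout_end_iff[OF j(1) jj(1)] j unfolding s_def by simp
    then show ?thesis
      unfolding low[OF j(1) jj(1)] using near_degree_3_layout_start[OF j(1) jj(1,4)] by blast
  qed
  have low_j': "{x. x < n \<and> far_leaf j' x} = {}"
  proof -
    have "near_degree (2*n) (lay j') 3 s (n - 1)"
      using near_degree_3_layout_end_iff[OF jj(2,3)] unfolding s_def by simp
    then show ?thesis
      unfolding low[OF jj(2,3)] using near_degree_3_layout_start[OF jj(2,3,5)] by blast
  qed
  have "card {x. x < 2*n \<and> far_leaf j x} = Suc (card {x. n \<le> x \<and> x < 2*n \<and> far_leaf j' x})"
    using card_split_low_high[of "far_leaf j"] low_j high by simp
  moreover have "card {x. x < 2*n \<and> far_leaf j' x} = card {x. n \<le> x \<and> x < 2*n \<and> far_leaf j' x}"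
    using card_split_low_high[of "far_leaf j'"] low_j' by simp
  ultimately show False using count by simp
qed

end

section \<open>The class F_n\<close>

definition F_paths :: "nat \<Rightarrow> (nat \<Rightarrow> nat) \<Rightarrow> nat set \<Rightarrow> graph" where
  "F_paths n \<sigma> B x y \<longleftrightarrow>
     (\<exists>i. ((x = \<sigma> i \<and> y = \<sigma> (Suc i)) \<or> (y = \<sigma> i \<and> x = \<sigma> (Suc i))) \<and>
          (Suc i < n \<or> (n \<le> i \<and> Suc i < 2*n \<and> i \<notin> B)))"

definition F_graph :: "nat \<Rightarrow> (nat \<Rightarrow> nat) \<Rightarrow> nat set \<Rightarrow> nat \<Rightarrow> nat \<Rightarrow> graph" where
  "F_graph n \<sigma> B u v x y \<longleftrightarrow> F_paths n \<sigma> B x y \<or> (x = \<sigma> u \<and> y = \<sigma> v) \<or> (y = \<sigma> u \<and> x = \<sigma> v)"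

definition F_params :: "nat \<Rightarrow> (nat \<Rightarrow> nat) \<Rightarrow> nat set \<Rightarrow> nat \<Rightarrow> nat \<Rightarrow> bool" where
  "F_params n \<sigma> B u v \<longleftrightarrow>
     bij_betw \<sigma> {0..<2*n} {0..<2*n} \<and> B \<subseteq> {n..<2*n} \<and> n \<le> u \<and> u < 2*n \<and> v < n"

lemma F_class_iff: "E \<in> F_class n \<longleftrightarrow> (\<exists>\<sigma> B u v. F_params n \<sigma> B u v \<and> E = F_graph n \<sigma> B u v)"
  unfolding F_class_def F_params_def F_graph_def F_paths_def by (simp only: fun_eq_iff mem_Collect_eq) blast

lemma F_graph_sym: "F_graph n \<sigma> B u v x y = F_graph n \<sigma> B u v y x"
  unfolding F_graph_def F_paths_def by blast

lemma F_graph_relabel: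
  assumes "F_params n \<sigma> B u v" "a < 2*n" "b < 2*n"
  shows "F_graph n \<sigma> B u v (\<sigma> a) (\<sigma> b) = layout n B u v a b"
proof -
  have inj: "\<And>p q. p < 2*n \<Longrightarrow> q < 2*n \<Longrightarrow> \<sigma> p = \<sigma> q \<longleftrightarrow> p = q"
    using assms(1) unfolding F_params_def bij_betw_def by (auto dest: inj_onD)
  have uv: "u < 2*n" "v < 2*n" using assms(1) unfolding F_params_def by auto
  show ?thesis
  proof
    assume "F_graph n \<sigma> B u v (\<sigma> a) (\<sigma> b)"
    then consider i where "(\<sigma> a = \<sigma> i \<and> \<sigma> b = \<sigma> (Suc i)) \<or> (\<sigma> b = \<sigma> i \<and> \<sigma> a = \<sigma> (Suc i))"
          "Suc i < n \<or> (n \<le> i \<and> Suc i < 2*n \<and> i \<notin> B)"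
      | "\<sigma> a = \<sigma> u \<and> \<sigma> b = \<sigma> v" | "\<sigma> b = \<sigma> u \<and> \<sigma> a = \<sigma> v"
      unfolding F_graph_def F_paths_def by blast
    then show "layout n B u v a b"
    proof cases
      case 1
      then have "Suc i < 2*n" by auto
      then show ?thesis using 1 inj[of a i] inj[of b "Suc i"] inj[of b i] inj[of a "Suc i"] assms
        unfolding layout_def path_arc_def by auto
    qed (use inj[of a u] inj[of b v] inj[of b u] inj[of a v] uv assms in \<open>auto simp: layout_def\<close>)
  next
    assume "layout n B u v a b"
    then show "F_graph n \<sigma> B u v (\<sigma> a) (\<sigma> b)"
      unfolding layout_def path_arc_def F_graph_def F_paths_def by blast
  qed
qed

lemma F_graph_bounded:
  assumes "F_params n \<sigma> B u v" "F_graph n \<sigma> B u v x y"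
  shows "x < 2*n \<and> y < 2*n"
proof -
  have range: "\<And>p. p < 2*n \<Longrightarrow> \<sigma> p < 2*n" and "u < 2*n" "v < 2*n"
    using assms(1) unfolding F_params_def bij_betw_def by auto
  with assms(2) show ?thesis unfolding F_graph_def F_paths_def
    by (elim disjE exE conjE) (auto intro!: range)
qed

lemma finite_F_class: "finite (F_class n)"
proof -
  let ?bounded = "{E. \<forall>x y. E x y \<longrightarrow> x < 2*n \<and> y < 2*n}"
  have "inj_on (\<lambda>E. {(x, y). E x y}) ?bounded"
    by (rule inj_onI) (auto simp: fun_eq_iff set_eq_iff)
  moreover have "(\<lambda>E. {(x, y). E x y}) ` ?bounded \<subseteq> Pow ({..<2*n} \<times> {..<2*n})"
    by auto
  ultimately have "finite ?bounded"
    by (rule inj_on_finite) simp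
  moreover have "F_class n \<subseteq> ?bounded"
  proof
    fix E assume "E \<in> F_class n"
    then obtain \<sigma> B u v where "F_params n \<sigma> B u v" "E = F_graph n \<sigma> B u v"
      unfolding F_class_iff by blast
    then show "E \<in> ?bounded" using F_graph_bounded by blast
  qed
  ultimately show ?thesis using finite_subset by blast
qed

lemma card_doubleton_le: "card {a, b} \<le> 2"
  by (cases "a = b") auto

lemma arc_surplus_F_graph_move: "arc_surplus N (F_graph n \<sigma> B u v) (F_graph n \<sigma> B u v') \<le> 2"
proof -
  have "{(i, k). i < N \<and> k < N \<and> F_graph n \<sigma> B u v i k \<and> \<not> F_graph n \<sigma> B u v' i k}
      \<subseteq> {(\<sigma> u, \<sigma> v), (\<sigma> v, \<sigma> u)}"
    unfolding F_graph_def by auto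
  then have "arc_surplus N (F_graph n \<sigma> B u v) (F_graph n \<sigma> B u v') \<le> card {(\<sigma> u, \<sigma> v), (\<sigma> v, \<sigma> u)}"
    unfolding arc_surplus_def by (intro card_mono) simp_all
  then show ?thesis using card_doubleton_le[of "(\<sigma> u, \<sigma> v)" "(\<sigma> v, \<sigma> u)"] by linarith
qed

text \<open>Moving the extra edge changes two arcs on each side, and the moved graphs have a
  fractional isomorphism.\<close>

lemma tree_dist_F_graph_le:
  assumes "wl_equiv N (F_graph n \<sigma> B u j) (F_graph n' \<sigma>' B' u' j')"
  shows "tree_dist N (F_graph n \<sigma> B u v) (F_graph n' \<sigma>' B' u' v') \<le> 4"
proof -
  obtain S where S: "doubly_stochastic N S" and comm:
    "\<forall>i<N. \<forall>k<N. (\<Sum>l<N. adj (F_graph n \<sigma> B u j) i l * S l k) = (\<Sum>l<N. S i l * adj (F_graph n' \<sigma>' B' u' j') l k)"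
    using fractional_iso_of_wl_equiv[OF F_graph_sym F_graph_sym assms] by blast
  have "tree_dist N (F_graph n \<sigma> B u v) (F_graph n' \<sigma>' B' u' v') \<le> 2 * real 2"
    by (rule tree_dist_le_perturbed_fractional_iso[where K="F_graph n \<sigma> B u j" and K'="F_graph n' \<sigma>' B' u' j'"])
      (use S comm arc_surplus_F_graph_move in auto)
  then show ?thesis by simp
qed

lemma F_graph_move_not_wl_equiv:
  assumes params: "F_params n \<sigma> B u v"
    and j: "j < (n + 1) div 2" "j' < (n + 1) div 2" "j \<noteq> j'"
  shows "\<not> wl_equiv (2*n) (F_graph n \<sigma> B u j) (F_graph n \<sigma> B u j')"
proof -
  have bij: "bij_betw \<sigma> {0..<2*n} {0..<2*n}" and u: "n \<le> u" "u < 2*n"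
    using params unfolding F_params_def by auto
  have relabel: "wl_equiv (2*n) (F_graph n \<sigma> B u k) (F_graph n \<sigma> B u k')
      \<longleftrightarrow> wl_equiv (2*n) (layout n B u k) (layout n B u k')" if "k < n" "k' < n" for k k'
    using that params
    by (intro wl_equiv_relabel[OF bij]) (simp_all add: F_graph_relabel F_params_def)
  have layouts: "\<not> wl_equiv (2*n) (layout n B u k) (layout n B u k')"
    if "k < k'" "k' < (n + 1) div 2" for k k'
  proof (cases "k = 0")
    case True
    then show ?thesis using layout_start_not_wl_equiv[OF u, of k'] that by auto
  next
    case False
    then show ?thesis using layout_not_wl_equiv[OF u, of k k'] that by auto
  qed
  have "j < n" "j' < n" using j by auto
  from j(3) consider "j < j'" | "j' < j" by linarith
  then show ?thesis
  proof cases
    case 1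
    then show ?thesis using relabel[of j j'] layouts[of j j'] \<open>j < n\<close> \<open>j' < n\<close> j by simp
  next
    case 2
    then show ?thesis
      using relabel[of j' j] layouts[of j' j] \<open>j < n\<close> \<open>j' < n\<close> j wl_equiv_sym by blast
  qed
qed

section \<open>Covering numbers\<close>

lemma covering_number_le:
  assumes "C \<subseteq> X" "finite C" "\<And>x. x \<in> X \<Longrightarrow> \<exists>y\<in>C. d x y \<le> \<epsilon>"
  shows "covering_number X d \<epsilon> \<le> card C"
  unfolding covering_number_def using assms by (intro Least_le) blast

lemma obtain_separated_cover:
  assumes "finite X" and refl: "\<And>x. x \<in> X \<Longrightarrow> d x x \<le> \<epsilon>"
  obtains P where "P \<subseteq> X"
    and "\<And>p q. p \<in> P \<Longrightarrow> q \<in> P \<Longrightarrow> d p q \<le> \<epsilon> \<Longrightarrow> d q p \<le> \<epsilon> \<Longrightarrow> p = q"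
    and "\<And>x. x \<in> X \<Longrightarrow> \<exists>p\<in>P. d x p \<le> \<epsilon>"
proof -
  define separated where
    "separated P \<longleftrightarrow> P \<subseteq> X \<and> (\<forall>p\<in>P. \<forall>q\<in>P. d p q \<le> \<epsilon> \<and> d q p \<le> \<epsilon> \<longrightarrow> p = q)" for P
  have "finite (Collect separated)"
    using \<open>finite X\<close> by (rule rev_finite_subset[OF finite_Pow_iff[THEN iffD2]]) (auto simp: separated_def)
  moreover have "separated {}" by (simp add: separated_def)
  ultimately obtain P where P: "separated P" and maximal: "\<And>P'. separated P' \<Longrightarrow> P \<subseteq> P' \<Longrightarrow> P = P'"
    using finite_has_maximal[of "Collect separated"] by blast
  have "\<exists>p\<in>P. d x p \<le> \<epsilon>" if "x \<in> X" for x
  proof (rule ccontr)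
    assume far: "\<not> (\<exists>p\<in>P. d x p \<le> \<epsilon>)"
    then have "separated (insert x P)" using P that unfolding separated_def by auto
    then have "x \<in> P" using maximal by blast
    then show False using far refl[OF that] by blast
  qed
  then show ?thesis using that P unfolding separated_def by blast
qed

text \<open>A maximal separated set P covers X, and (p, j) \<mapsto> f p j is injective on P \<times> J.\<close>

lemma covering_number_mult_card_le:
  assumes "finite X" "finite Q" "\<And>x. x \<in> X \<Longrightarrow> d x x \<le> \<epsilon>"
    and into: "\<And>x j. x \<in> X \<Longrightarrow> j \<in> J \<Longrightarrow> f x j \<in> Q"
    and close: "\<And>x y j k. x \<in> X \<Longrightarrow> y \<in> X \<Longrightarrow> j \<in> J \<Longrightarrow> k \<in> J \<Longrightarrow> f x j = f y k \<Longrightarrow>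
        d x y \<le> \<epsilon> \<and> d y x \<le> \<epsilon>"
    and distinct: "\<And>x j k. x \<in> X \<Longrightarrow> j \<in> J \<Longrightarrow> k \<in> J \<Longrightarrow> f x j = f x k \<Longrightarrow> j = k"
  shows "covering_number X d \<epsilon> * card J \<le> card Q"
proof -
  obtain P where P: "P \<subseteq> X"
    and separated: "\<And>p q. p \<in> P \<Longrightarrow> q \<in> P \<Longrightarrow> d p q \<le> \<epsilon> \<Longrightarrow> d q p \<le> \<epsilon> \<Longrightarrow> p = q"
    and covers: "\<And>x. x \<in> X \<Longrightarrow> \<exists>p\<in>P. d x p \<le> \<epsilon>"
    using obtain_separated_cover[where d=d and \<epsilon>=\<epsilon>, OF assms(1,3)] by blast
  have "finite P" using P \<open>finite X\<close> finite_subset by blast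
  have "inj_on (\<lambda>(p, j). f p j) (P \<times> J)"
  proof (rule inj_onI, clarify)
    fix p j q k assume "p \<in> P" "j \<in> J" "q \<in> P" "k \<in> J" "f p j = f q k"
    moreover from this have "p = q" using separated close P by blast
    ultimately show "p = q \<and> j = k" using distinct P by blast
  qed
  then have "card (P \<times> J) \<le> card Q"
    using into P \<open>finite Q\<close> by (intro card_inj_on_le) auto
  then have "card P * card J \<le> card Q" by (simp add: card_cartesian_product)
  moreover have "covering_number X d \<epsilon> \<le> card P"
    using covering_number_le[OF P \<open>finite P\<close>] covers by blast
  ultimately show ?thesis using mult_le_mono1 order_trans by blast
qed

lemma finite_quotient_wl_indist_rel:
  "finite X \<Longrightarrow> finite (X // wl_indist_rel N X)"
  unfolding quotient_def wl_indist_rel_def by simp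

lemma obtain_F_params:
  obtains \<sigma> B u v where "\<And>G. G \<in> F_class n \<Longrightarrow>
    F_params n (\<sigma> G) (B G) (u G) (v G) \<and> G = F_graph n (\<sigma> G) (B G) (u G) (v G)"
proof -
  have "\<forall>G\<in>F_class n. \<exists>\<sigma> B u v. F_params n \<sigma> B u v \<and> G = F_graph n \<sigma> B u v"
    by (simp add: F_class_iff)
  then show ?thesis using that by metis
qed

lemma F_graph_move_in_F_class: "F_params n \<sigma> B u v \<Longrightarrow> j < n \<Longrightarrow> F_graph n \<sigma> B u j \<in> F_class n"
  unfolding F_class_iff F_params_def by blast

lemma wl_indist_rel_class_eqD:
  assumes "G \<in> X" "H \<in> X" "wl_indist_rel N X `` {G} = wl_indist_rel N X `` {H}"
  shows "wl_equiv N G H"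
proof -
  have "H \<in> wl_indist_rel N X `` {H}" using assms(2) by (simp add: wl_indist_rel_def wl_equiv_def)
  then have "H \<in> wl_indist_rel N X `` {G}" using assms(3) by simp
  then show ?thesis by (simp add: wl_indist_rel_def)
qed

lemma covering_number_F_class_mult_le:
  "covering_number (F_class n) (tree_dist (2*n)) 4 * ((n + 1) div 2)
     \<le> card (F_class n // wl_indist_rel (2*n) (F_class n))"
proof -
  let ?F = "F_class n" and ?rel = "wl_indist_rel (2*n) (F_class n)"
  obtain \<sigma> B u v where repr: "\<And>G. G \<in> ?F \<Longrightarrow>
      F_params n (\<sigma> G) (B G) (u G) (v G) \<and> G = F_graph n (\<sigma> G) (B G) (u G) (v G)"
    using obtain_F_params by blast
  define move where "move G j = F_graph n (\<sigma> G) (B G) (u G) j" for G j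
  define J where "J = {0..<(n + 1) div 2}"
  have move_in_F: "move G j \<in> ?F" if "G \<in> ?F" "j \<in> J" for G j
  proof -
    have "j < n" using that(2) unfolding J_def by auto
    then show ?thesis
      unfolding move_def using F_graph_move_in_F_class repr[OF that(1)] by blast
  qed
  have "covering_number ?F (tree_dist (2*n)) 4 * card J \<le> card (?F // ?rel)"
  proof (rule covering_number_mult_card_le[where f="\<lambda>G j. ?rel `` {move G j}"])
    show "finite ?F" by (rule finite_F_class)
    show "finite (?F // ?rel)" by (rule finite_quotient_wl_indist_rel[OF finite_F_class])
    show "tree_dist (2*n) G G \<le> 4" for G by (simp add: tree_dist_self)
    show "?rel `` {move G j} \<in> ?F // ?rel" if "G \<in> ?F" "j \<in> J" for G j
      using that by (intro quotientI move_in_F)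
  next
    fix G H j k assume "G \<in> ?F" "H \<in> ?F" "j \<in> J" "k \<in> J" and "?rel `` {move G j} = ?rel `` {move H k}"
    then have "wl_equiv (2*n) (move G j) (move H k)"
      using wl_indist_rel_class_eqD[OF move_in_F move_in_F] by blast
    then have "tree_dist (2*n) (F_graph n (\<sigma> G) (B G) (u G) (v G)) (F_graph n (\<sigma> H) (B H) (u H) (v H)) \<le> 4"
      and "tree_dist (2*n) (F_graph n (\<sigma> H) (B H) (u H) (v H)) (F_graph n (\<sigma> G) (B G) (u G) (v G)) \<le> 4"
      unfolding move_def by (auto intro: tree_dist_F_graph_le dest: wl_equiv_sym)
    then show "tree_dist (2*n) G H \<le> 4 \<and> tree_dist (2*n) H G \<le> 4"
      by (simp only: repr[OF \<open>G \<in> ?F\<close>, THEN conjunct2, symmetric]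
          repr[OF \<open>H \<in> ?F\<close>, THEN conjunct2, symmetric])
  next
    fix G j k assume "G \<in> ?F" "j \<in> J" "k \<in> J" and "?rel `` {move G j} = ?rel `` {move G k}"
    then have "wl_equiv (2*n) (move G j) (move G k)"
      using wl_indist_rel_class_eqD[OF move_in_F move_in_F] by blast
    moreover have "j < (n + 1) div 2" "k < (n + 1) div 2"
      using \<open>j \<in> J\<close> \<open>k \<in> J\<close> unfolding J_def by auto
    ultimately show "j = k"
      using F_graph_move_not_wl_equiv[OF repr[OF \<open>G \<in> ?F\<close>, THEN conjunct1], of j k]
      unfolding move_def by blast
  qed
  then show ?thesis unfolding J_def by simp
qed

theorem mainTheorem12:
  fixes n :: nat
  assumes "n \<ge> 1"
  shows "real (covering_number (F_class n) (tree_dist (2*n)) 4)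
           \<le> 2 * real (card (F_class n // wl_indist_rel (2*n) (F_class n))) / real n"
proof -
  let ?cover = "covering_number (F_class n) (tree_dist (2*n)) 4"
    and ?classes = "card (F_class n // wl_indist_rel (2*n) (F_class n))"
  have "?cover * n \<le> ?cover * (2 * ((n + 1) div 2))"
    by (intro mult_le_mono2) simp
  also have "\<dots> \<le> 2 * ?classes"
    using covering_number_F_class_mult_le[of n] by simp
  finally have "real ?cover * real n \<le> 2 * real ?classes"
    by (metis of_nat_le_iff of_nat_mult of_nat_numeral)
  then show ?thesis
    using assms by (simp add: pos_le_divide_eq)
qed

end
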